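(* Let $k\ge 1$ and $n\ge 1$ be integers, let $\omega=(\omega_1,\omega_2,\ldots)$ be a sequence of integers (the weight vector), let $t_1,\ldots,t_k$ be indeterminates, and set $t_j:=0$ for $j>k$. Define the weighted isobaric polynomial $$P_{\omega,k,n}(t_1,\ldots,t_k)=\sum_{\alpha\vdash n}\binom{|\alpha|}{\alpha_1,\ldots,\alpha_k}\frac{\sum_{j=1}^k\omega_j\alpha_j}{|\alpha|}\,t_1^{\alpha_1}\cdots t_k^{\alpha_k},$$ where the sum runs over all $k$-tuples $\alpha=(\alpha_1,\ldots,\alpha_k)$ of nonnegative integers with $\sum_{j=1}^k j\alpha_j=n$, and $|\alpha|=\alpha_1+\cdots+\alpha_k$. Let $H_{+}$ be the $n\times n$ lower Hessenberg matrix whose entries are: for $1\le i\le n-1$, $(H_+)_{i,j}=t_{i-j+1}$ if $j\le i$, $(H_+)_{i,i+1}=1$, and $(H_+)_{i,j}=0$ if $j>i+1$; and in the last row $(H_+)_{n,j}=\omega_{n-j+1}t_{n-j+1}$ for $1\le j\le n$. That is, $$H_{+}=\begin{pmatrix} t_1&1&0&\cdots&0\\ t_2&t_1&1&\cdots&0\\ \vdots&\vdots&\vdots&\ddots&\vdots\\ t_{n-1}&t_{n-2}&t_{n-3}&\cdots&1\\ \omega_nt_n&\omega_{n-1}t_{n-1}&\omega_{n-2}t_{n-2}&\cdots&\omega_1t_1\end{pmatrix}.$$ Let $H_-$ be the same matrix except that every super-diagonal entry $1$ is replaced by $-1$. Then (a) $\operatorname{perm} H_+ = P_{\omega,k,n}(t_1,\ldots,t_k)$,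 and (b) $\det H_- = P_{\omega,k,n}(t_1,\ldots,t_k)$.
   Context: The permanent of a square matrix $M=(m_{ij})_{1\le i,j\le n}$ is $\operatorname{perm}M=\sum_{\sigma\in S_n}\prod_{i=1}^n m_{i,\sigma(i)}$, i.e. the determinant expansion with all signs taken to be $+$. *)

theory Defs
  imports "Jordan_Normal_Form.Determinant"
begin

definition perm_mat :: "'a mat \<Rightarrow> 'a :: comm_ring_1" where
  "perm_mat A = (\<Sum> p \<in> {p. p permutes {0 ..< dim_row A}}.
     (\<Prod> i = 0 ..< dim_row A. A $$ (i, p i)))"

text \<open>Index set of the sum: k-tuples alpha (stored as nat => nat, zero outside 1..k)
  with sum_j j * alpha_j = n.\<close>
definition isobaric_tuples :: "nat \<Rightarrow> nat \<Rightarrow> (nat \<Rightarrow> nat) set" where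
  "isobaric_tuples k n = {\<alpha>. (\<forall>j. (j < 1 \<or> k < j) \<longrightarrow> \<alpha> j = 0) \<and> (\<Sum>j=1..k. j * \<alpha> j) = n}"

definition weighted_isobaric ::
  "(nat \<Rightarrow> int) \<Rightarrow> nat \<Rightarrow> nat \<Rightarrow> (nat \<Rightarrow> 'a::field_char_0) \<Rightarrow> 'a" where
  "weighted_isobaric \<omega> k n t =
     (\<Sum>\<alpha> \<in> isobaric_tuples k n.
        let a = (\<Sum>j=1..k. \<alpha> j) in
        (of_nat (fact a) / (\<Prod>j=1..k. of_nat (fact (\<alpha> j))))
        * (of_int (\<Sum>j=1..k. \<omega> j * int (\<alpha> j)) / of_nat a)
        * (\<Prod>j=1..k. t j ^ \<alpha> j))"

text \<open>The Hessenberg matrix H with super-diagonal entry s (s = 1 gives H_+, s = -1 gives H_-).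
  Paper indices (i',j') in 1..n correspond to (i+1,j+1).\<close>
definition hess_mat :: "'a::comm_ring_1 \<Rightarrow> (nat \<Rightarrow> int) \<Rightarrow> (nat \<Rightarrow> 'a) \<Rightarrow> nat \<Rightarrow> 'a mat" where
  "hess_mat s \<omega> t n = mat n n (\<lambda>(i, j).
     let i' = i + 1; j' = j + 1 in
     if i' < n then
       (if j' \<le> i' then t (i' - j' + 1) else if j' = i' + 1 then s else 0)
     else of_int (\<omega> (n - j' + 1)) * t (n - j' + 1))"

end

theory Submission
  imports Defs
begin

text \<open>Only permutations with \<open>p i \<le> i + 1\<close> contribute to the permanent or determinant of a lower
  Hessenberg matrix. Such a permutation of \<open>{0..n}\<close> is determined by \<open>a = p n\<close> together with its
  restriction to \<open>{0..<a}\<close>; on the remaining indices it is the cycle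
  \<open>a \<mapsto> a + 1 \<mapsto> \<dots> \<mapsto> n \<mapsto> a\<close>. Expanding along the last row thus expresses the
  permanent (determinant) of \<open>H+\<close> (\<open>H-\<close>) through those of its leading principal submatrices,
  the super-diagonal entries \<open>1\<close> (\<open>-1\<close>) exactly compensating the sign of the cycle.
  These submatrices are Toeplitz, and the recurrence shows that their permanent (determinant) is
  the complete isobaric polynomial \<open>Q m = \<Sum>\<alpha> \<turnstile> m. (|\<alpha>|; \<alpha>) t ^ \<alpha>\<close>, which obeys
  \<open>Q m = \<Sum>j. t j * Q (m - j)\<close>. The last row then yields \<open>\<Sum>j. \<omega> j * t j * Q (n - j)\<close>,
  and this is \<open>P \<omega> k n\<close> because removing a part \<open>j\<close> from \<open>\<alpha>\<close> scales the multinomial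
  coefficient by \<open>\<alpha> j / |\<alpha>|\<close>.\<close>

section \<open>Hessenberg permutations\<close>

definition hess_perm :: "nat \<Rightarrow> (nat \<Rightarrow> nat) \<Rightarrow> bool" where
  "hess_perm n p \<longleftrightarrow> p permutes {0..<n} \<and> (\<forall>i<n. p i \<le> Suc i)"

definition cycle_up :: "nat \<Rightarrow> nat \<Rightarrow> nat \<Rightarrow> nat" where
  "cycle_up a n i = (if a \<le> i \<and> i < n then Suc i else if i = n then a else i)"

lemma cycle_up_Suc: "a \<le> n \<Longrightarrow> cycle_up a (Suc n) = cycle_up a n \<circ> Transposition.transpose n (Suc n)"
  by (rule ext) (auto simp: cycle_up_def Transposition.transpose_def)

lemma cycle_up_self: "cycle_up a a = id"
  by (rule ext) (auto simp: cycle_up_def)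

lemma cycle_up_permutes_sign:
  "a \<le> n \<Longrightarrow> cycle_up a n permutes {a..n} \<and> sign (cycle_up a n) = (-1) ^ (n - a)"
proof (induction n)
  case 0
  then show ?case using permutes_id[of "{0..0::nat}"] cycle_up_self[of 0] by (simp add: id_def)
next
  case (Suc n)
  show ?case
  proof (cases "a = Suc n")
    case True
    then show ?thesis using permutes_id[of "{a..a::nat}"] cycle_up_self[of a] by (simp add: id_def)
  next
    case False
    then have an: "a \<le> n" using Suc by simp
    from Suc.IH[OF an] have perm: "cycle_up a n permutes {a..Suc n}" and sg: "sign (cycle_up a n) = (-1) ^ (n - a)"
      by (auto intro: permutes_subset)
    have swap: "Transposition.transpose n (Suc n) permutes {a..Suc n}"
      by (rule permutes_swap_id) (use an in auto)
    have "cycle_up a (Suc n) permutes {a..Suc n}"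
      unfolding cycle_up_Suc[OF an] by (rule permutes_compose[OF swap perm])
    moreover have "sign (cycle_up a (Suc n)) = (-1) ^ (Suc n - a)"
    proof -
      have "permutation (cycle_up a n)" "permutation (Transposition.transpose n (Suc n))"
        using perm swap by (auto simp: permutation_permutes)
      then show ?thesis
        unfolding cycle_up_Suc[OF an] using an by (simp add: sign_compose sign_swap_id sg Suc_diff_le)
    qed
    ultimately show ?thesis by simp
  qed
qed

definition hess_perm_extend :: "nat \<Rightarrow> nat \<Rightarrow> (nat \<Rightarrow> nat) \<Rightarrow> nat \<Rightarrow> nat" where
  "hess_perm_extend a n q = q \<circ> cycle_up a n"

lemma hess_perm_extend_apply:
  assumes "hess_perm a q" "a \<le> n"
  shows "hess_perm_extend a n q i = (if i < a then q i else if i < n then Suc i else if i = n then a else i)"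
  using assms permutes_not_in[of q "{0..<a}"]
  by (simp add: hess_perm_extend_def cycle_up_def hess_perm_def)

lemma hess_perm_extend:
  assumes "hess_perm a q" "a \<le> n"
  shows "hess_perm (Suc n) (hess_perm_extend a n q)"
proof -
  have "q permutes {0..<Suc n}"
    using assms by (auto simp: hess_perm_def intro: permutes_subset)
  moreover have "cycle_up a n permutes {0..<Suc n}"
    using cycle_up_permutes_sign[OF assms(2)] by (auto intro: permutes_subset)
  ultimately have "hess_perm_extend a n q permutes {0..<Suc n}"
    unfolding hess_perm_extend_def by (rule permutes_compose[rotated])
  then show ?thesis
    using assms by (auto simp: hess_perm_def hess_perm_extend_apply)
qed

lemma sign_hess_perm_extend:
  assumes "hess_perm a q" "a \<le> n"
  shows "sign (hess_perm_extend a n q) = sign q * (-1) ^ (n - a)"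
proof -
  have "permutation q" "permutation (cycle_up a n)"
    using assms cycle_up_permutes_sign[OF assms(2)] by (auto simp: hess_perm_def permutation_permutes)
  then show ?thesis
    using cycle_up_permutes_sign[OF assms(2)] by (simp add: hess_perm_extend_def sign_compose)
qed

text \<open>Downward induction on \<open>i\<close>: the preimage of \<open>i + 1\<close> is not \<open>n\<close>, not in the
  invariant block below \<open>p n\<close>, at least \<open>i\<close>, and not above \<open>i\<close> by the induction hypothesis.\<close>
lemma hess_perm_fixes_above_last:
  assumes p: "hess_perm (Suc n) p" and img: "p ` {0..<p n} = {0..<p n}"
  shows "p n \<le> i \<Longrightarrow> i < n \<Longrightarrow> p i = Suc i"
proof (induction "n - i" arbitrary: i rule: less_induct)
  case less
  have perm: "p permutes {0..<Suc n}" and le: "\<And>i. i < Suc n \<Longrightarrow> p i \<le> Suc i"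
    using p by (simp_all add: hess_perm_def)
  have "Suc i \<in> p ` {0..<Suc n}"
    using less.prems by (simp add: permutes_image[OF perm])
  then obtain j where j: "j < Suc n" "p j = Suc i" by auto
  have "j \<noteq> n"
  proof
    assume "j = n"
    then show False using j less.prems by simp
  qed
  moreover have "\<not> j < p n"
  proof
    assume "j < p n"
    then have "p j \<in> p ` {0..<p n}" by simp
    then have "p j \<in> {0..<p n}" by (simp only: img)
    then show False using j less.prems by simp
  qed
  moreover have "i \<le> j" using le[OF j(1)] j(2) by simp
  moreover have "\<not> i < j"
  proof
    assume "i < j"
    moreover have "j < n" using j(1) \<open>j \<noteq> n\<close> by simp
    ultimately have "p j = Suc j"
      using less.hyps[of j] \<open>\<not> j < p n\<close> by (simp add: diff_less_mono2)
    then show False using j \<open>i < j\<close> by simp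
  qed
  ultimately have "j = i" by simp
  then show ?case using j by simp
qed

lemma hess_perm_decompose:
  assumes p: "hess_perm (Suc n) p"
  defines "q \<equiv> \<lambda>i. if i < p n then p i else i"
  shows "p n \<le> n \<and> hess_perm (p n) q \<and> p = hess_perm_extend (p n) n q"
proof -
  have perm: "p permutes {0..<Suc n}" and le: "\<And>i. i < Suc n \<Longrightarrow> p i \<le> Suc i"
    using p by (auto simp: hess_perm_def)
  have inj: "inj p" using perm by (rule permutes_inj)
  have last: "p n \<le> n" using permutes_in_image[OF perm, of n] by auto
  have "p ` {0..<p n} \<subseteq> {0..<p n}"
  proof
    fix y assume "y \<in> p ` {0..<p n}"
    then obtain i where i: "i < p n" "y = p i" by auto
    have "p i \<le> p n" using le[of i] i last by auto
    moreover have "p i \<noteq> p n" using inj_eq[OF inj, of i n] i last by auto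
    ultimately show "y \<in> {0..<p n}" using i by auto
  qed
  then have img: "p ` {0..<p n} = {0..<p n}"
    using endo_inj_surj inj_on_subset[OF inj subset_UNIV] by blast
  have "bij_betw q {0..<p n} {0..<p n}"
  proof -
    have "bij_betw p {0..<p n} {0..<p n}"
      using img inj_on_subset[OF inj subset_UNIV] by (simp add: bij_betw_def)
    then show ?thesis by (rule bij_betw_cong[THEN iffD1, rotated]) (auto simp: q_def)
  qed
  then have "q permutes {0..<p n}" by (rule bij_imp_permutes) (auto simp: q_def)
  then have q: "hess_perm (p n) q" using le last by (auto simp: hess_perm_def q_def)
  have "p i = hess_perm_extend (p n) n q i" for i
    unfolding hess_perm_extend_apply[OF q last]
    using hess_perm_fixes_above_last[OF p img, of i] permutes_not_in[OF perm, of i] last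
    by (auto simp: q_def)
  with last q show ?thesis by blast
qed

lemma bij_betw_hess_perm_extend:
  "bij_betw (\<lambda>(a, q). hess_perm_extend a n q) (SIGMA a:{..n}. {q. hess_perm a q}) {p. hess_perm (Suc n) p}"
proof (rule bij_betwI')
  fix x y assume "x \<in> (SIGMA a:{..n}. {q. hess_perm a q})" "y \<in> (SIGMA a:{..n}. {q. hess_perm a q})"
  then obtain a q b r where x: "x = (a, q)" "a \<le> n" "hess_perm a q"
    and y: "y = (b, r)" "b \<le> n" "hess_perm b r" by auto
  show "((case x of (a, q) \<Rightarrow> hess_perm_extend a n q) = (case y of (a, q) \<Rightarrow> hess_perm_extend a n q)) = (x = y)"
  proof
    assume "(case x of (a, q) \<Rightarrow> hess_perm_extend a n q) = (case y of (a, q) \<Rightarrow> hess_perm_extend a n q)"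
    then have eq: "hess_perm_extend a n q i = hess_perm_extend b n r i" for i
      using x y by simp
    have ab: "a = b"
      using eq[of n] x y by (simp add: hess_perm_extend_apply)
    have "q i = r i" for i
      using eq[of i] x y permutes_not_in[of q "{0..<b}" i] permutes_not_in[of r "{0..<b}" i]
      by (cases "i < a") (auto simp: ab hess_perm_extend_apply hess_perm_def)
    then show "x = y" using ab x y by auto
  qed simp
next
  fix x assume "x \<in> (SIGMA a:{..n}. {q. hess_perm a q})"
  then show "(case x of (a, q) \<Rightarrow> hess_perm_extend a n q) \<in> {p. hess_perm (Suc n) p}"
    using hess_perm_extend by auto
next
  fix p assume "p \<in> {p. hess_perm (Suc n) p}"
  then show "\<exists>x\<in>(SIGMA a:{..n}. {q. hess_perm a q}). p = (case x of (a, q) \<Rightarrow> hess_perm_extend a n q)"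
    using hess_perm_decompose[of n p] by force
qed

definition hess_sum :: "((nat \<Rightarrow> nat) \<Rightarrow> 'a::comm_ring_1) \<Rightarrow> (nat \<Rightarrow> nat \<Rightarrow> 'a) \<Rightarrow> nat \<Rightarrow> 'a" where
  "hess_sum c A n = (\<Sum>p | hess_perm n p. c p * (\<Prod>i = 0..<n. A i (p i)))"

definition hess_weight :: "((nat \<Rightarrow> nat) \<Rightarrow> 'a::comm_ring_1) \<Rightarrow> 'a \<Rightarrow> bool" where
  "hess_weight c \<epsilon> \<longleftrightarrow> c id = 1 \<and>
     (\<forall>n a q. a \<le> n \<longrightarrow> hess_perm a q \<longrightarrow> c (hess_perm_extend a n q) = c q * \<epsilon> ^ (n - a))"

lemma finite_hess_perm: "finite {p. hess_perm n p}"
  by (rule finite_subset[OF _ finite_permutations[of "{0..<n}"]]) (auto simp: hess_perm_def)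

lemma hess_sum_0: "hess_sum c A 0 = c id"
proof -
  have "{p. hess_perm 0 p} = {id}" by (auto simp: hess_perm_def)
  then show ?thesis by (simp add: hess_sum_def)
qed

lemma hess_sum_cong:
  assumes "\<And>i j. i < n \<Longrightarrow> j < n \<Longrightarrow> A i j = B i j"
  shows "hess_sum c A n = hess_sum c B n"
  unfolding hess_sum_def
proof (intro sum.cong refl arg_cong2[where f = "(*)"] prod.cong)
  fix p i assume "p \<in> {p. hess_perm n p}" "i \<in> {0..<n}"
  then show "A i (p i) = B i (p i)"
    using assms permutes_in_image[of p "{0..<n}" i] by (auto simp: hess_perm_def)
qed

lemma prod_hess_perm_extend:
  assumes "hess_perm a q" "a \<le> n"
  shows "(\<Prod>i = 0..<Suc n. A i (hess_perm_extend a n q i)) =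
         (\<Prod>i = 0..<a. A i (q i)) * (\<Prod>i = a..<n. A i (Suc i)) * A n a"
proof -
  have "(\<Prod>i = 0..<Suc n. A i (hess_perm_extend a n q i)) =
      (\<Prod>i = 0..<n. A i (hess_perm_extend a n q i)) * A n a"
    using assms by (simp add: hess_perm_extend_apply)
  also have "(\<Prod>i = 0..<n. A i (hess_perm_extend a n q i)) =
      (\<Prod>i = 0..<a. A i (hess_perm_extend a n q i)) * (\<Prod>i = a..<n. A i (hess_perm_extend a n q i))"
    using assms(2) by (simp add: prod.atLeastLessThan_concat)
  also have "(\<Prod>i = 0..<a. A i (hess_perm_extend a n q i)) = (\<Prod>i = 0..<a. A i (q i))"
    by (rule prod.cong) (auto simp: hess_perm_extend_apply[OF assms])
  also have "(\<Prod>i = a..<n. A i (hess_perm_extend a n q i)) = (\<Prod>i = a..<n. A i (Suc i))"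
    by (rule prod.cong) (auto simp: hess_perm_extend_apply[OF assms])
  finally show ?thesis .
qed

text \<open>Expansion along the last row: the superdiagonal factor \<open>s ^ (n - a)\<close> picked up by the
  extended permutation is cancelled by the weight change \<open>\<epsilon> ^ (n - a)\<close>.\<close>
lemma hess_sum_Suc:
  assumes "hess_weight c \<epsilon>" and superdiag: "\<And>i. i < n \<Longrightarrow> A i (Suc i) = s" and "\<epsilon> * s = 1"
  shows "hess_sum c A (Suc n) = (\<Sum>a\<le>n. A n a * hess_sum c A a)"
proof -
  define F where "F p = c p * (\<Prod>i = 0..<Suc n. A i (p i))" for p
  have "hess_sum c A (Suc n) = (\<Sum>(a, q) \<in> (SIGMA a:{..n}. {q. hess_perm a q}). F (hess_perm_extend a n q))"
    unfolding hess_sum_def F_def[symmetric]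
    by (subst sum.reindex_bij_betw[OF bij_betw_hess_perm_extend, symmetric]) (simp add: split_def)
  also have "\<dots> = (\<Sum>a\<le>n. \<Sum>q | hess_perm a q. F (hess_perm_extend a n q))"
    by (subst sum.Sigma) (auto simp: finite_hess_perm)
  also have "\<dots> = (\<Sum>a\<le>n. A n a * hess_sum c A a)"
  proof (rule sum.cong[OF refl])
    fix a assume "a \<in> {..n}"
    then have a: "a \<le> n" by simp
    have "(\<Prod>i = a..<n. A i (Suc i)) = s ^ (n - a)"
      using superdiag by (simp add: prod.cong[of _ _ _ "\<lambda>_. s"])
    moreover have "\<epsilon> ^ (n - a) * s ^ (n - a) = 1"
      by (simp add: power_mult_distrib[symmetric] assms(3))
    moreover have c_extend: "c (hess_perm_extend a n q) = c q * \<epsilon> ^ (n - a)" if "hess_perm a q" for q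
      using assms(1) a that by (simp add: hess_weight_def)
    ultimately have "F (hess_perm_extend a n q) = A n a * (c q * (\<Prod>i = 0..<a. A i (q i)))"
      if "hess_perm a q" for q
      unfolding F_def c_extend[OF that] prod_hess_perm_extend[OF that a]
      by (metis (no_types, lifting) mult.assoc mult.commute mult.left_commute mult_1)
    then show "(\<Sum>q | hess_perm a q. F (hess_perm_extend a n q)) = A n a * hess_sum c A a"
      unfolding hess_sum_def sum_distrib_left by (intro sum.cong refl) auto
  qed
  finally show ?thesis .
qed

lemma hess_sum_eq_sum_permutes:
  assumes "\<And>i j. i < n \<Longrightarrow> j < n \<Longrightarrow> Suc i < j \<Longrightarrow> A i j = 0"
  shows "hess_sum c A n = (\<Sum>p | p permutes {0..<n}. c p * (\<Prod>i = 0..<n. A i (p i)))"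
  unfolding hess_sum_def
proof (rule sum.mono_neutral_left)
  show "\<forall>p \<in> {p. p permutes {0..<n}} - {p. hess_perm n p}. c p * (\<Prod>i = 0..<n. A i (p i)) = 0"
  proof
    fix p assume "p \<in> {p. p permutes {0..<n}} - {p. hess_perm n p}"
    then obtain i where p: "p permutes {0..<n}" and i: "i < n" "Suc i < p i"
      by (auto simp: hess_perm_def not_le)
    then have "A i (p i) = 0" using assms permutes_in_image[OF p, of i] by simp
    then have "(\<Prod>i = 0..<n. A i (p i)) = 0" by (intro prod_zero) (use i in auto)
    then show "c p * (\<Prod>i = 0..<n. A i (p i)) = 0" by simp
  qed
qed (auto simp: finite_permutations hess_perm_def)

lemma perm_mat_lower_hessenberg:
  assumes "A \<in> carrier_mat n n" "\<And>i j. i < n \<Longrightarrow> j < n \<Longrightarrow> Suc i < j \<Longrightarrow> A $$ (i, j) = 0"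
  shows "perm_mat A = hess_sum (\<lambda>_. 1) (\<lambda>i j. A $$ (i, j)) n"
  using assms by (simp add: hess_sum_eq_sum_permutes perm_mat_def)

lemma det_lower_hessenberg:
  assumes "A \<in> carrier_mat n n" "\<And>i j. i < n \<Longrightarrow> j < n \<Longrightarrow> Suc i < j \<Longrightarrow> A $$ (i, j) = 0"
  shows "det A = hess_sum signof (\<lambda>i j. A $$ (i, j)) n"
  using assms by (simp add: hess_sum_eq_sum_permutes det_def')

lemma hess_weight_one: "hess_weight (\<lambda>_. 1) 1"
  by (simp add: hess_weight_def)

lemma hess_weight_signof: "hess_weight signof (-1)"
  by (simp add: hess_weight_def sign_hess_perm_extend)

section \<open>Isobaric polynomials\<close>

definition multinom :: "nat \<Rightarrow> (nat \<Rightarrow> nat) \<Rightarrow> 'a::field_char_0" where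
  "multinom k \<alpha> = of_nat (fact (\<Sum>j=1..k. \<alpha> j)) / (\<Prod>j=1..k. of_nat (fact (\<alpha> j)))"

definition isobaric_monom :: "nat \<Rightarrow> (nat \<Rightarrow> 'a::field_char_0) \<Rightarrow> (nat \<Rightarrow> nat) \<Rightarrow> 'a" where
  "isobaric_monom k t \<alpha> = (\<Prod>j=1..k. t j ^ \<alpha> j)"

text \<open>This equals \<open>weighted_isobaric (\<lambda>_. 1)\<close> for \<open>m \<ge> 1\<close>, but is \<open>1\<close> rather than
  \<open>0/0 = 0\<close> at \<open>m = 0\<close>.\<close>
definition isobaric_poly :: "nat \<Rightarrow> (nat \<Rightarrow> 'a::field_char_0) \<Rightarrow> nat \<Rightarrow> 'a" where
  "isobaric_poly k t m = (\<Sum>\<alpha>\<in>isobaric_tuples k m. multinom k \<alpha> * isobaric_monom k t \<alpha>)"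

lemma isobaric_tuples_outside:
  assumes "\<alpha> \<in> isobaric_tuples k m" "j \<notin> {1..k}"
  shows "\<alpha> j = 0"
  using assms unfolding isobaric_tuples_def by (auto simp: not_le)

lemma isobaric_tuples_weight_le:
  assumes "\<alpha> \<in> isobaric_tuples k m" "j \<in> {1..k}"
  shows "j * \<alpha> j \<le> m"
proof -
  have "j * \<alpha> j \<le> (\<Sum>i=1..k. i * \<alpha> i)" by (rule member_le_sum) (use assms in auto)
  then show ?thesis using assms by (simp add: isobaric_tuples_def)
qed

lemma isobaric_tuples_le:
  assumes "\<alpha> \<in> isobaric_tuples k m"
  shows "\<alpha> j \<le> m"
proof (cases "j \<in> {1..k}")
  case True
  then show ?thesis
    using isobaric_tuples_weight_le[OF assms True] by (metis atLeastAtMost_iff le_trans mult_le_mono1 mult_1)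
qed (simp add: isobaric_tuples_outside[OF assms])

lemma isobaric_tuples_vanish:
  assumes "\<alpha> \<in> isobaric_tuples k m" "m < j"
  shows "\<alpha> j = 0"
proof (cases "j \<in> {1..k}")
  case True
  then have "j * \<alpha> j \<le> m" by (rule isobaric_tuples_weight_le[OF assms(1)])
  then show ?thesis using assms(2) by (cases "\<alpha> j") auto
qed (rule isobaric_tuples_outside[OF assms(1)])

lemma finite_isobaric_tuples: "finite (isobaric_tuples k m)"
proof (rule finite_subset)
  show "isobaric_tuples k m \<subseteq> {\<alpha>. \<forall>j. (j \<in> {..m} \<longrightarrow> \<alpha> j \<in> {..m}) \<and> (j \<notin> {..m} \<longrightarrow> \<alpha> j = 0)}"
  proof (intro subsetI CollectI allI conjI impI)
    fix \<alpha> j assume "\<alpha> \<in> isobaric_tuples k m"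
    then show "\<alpha> j \<in> {..m}" "j \<notin> {..m} \<Longrightarrow> \<alpha> j = 0"
      using isobaric_tuples_le isobaric_tuples_vanish by auto
  qed
qed (rule finite_set_of_finite_funs; simp)

lemma isobaric_tuples_0: "isobaric_tuples k 0 = {\<lambda>_. 0}"
proof -
  have "\<alpha> = (\<lambda>_. 0)" if "\<alpha> \<in> isobaric_tuples k 0" for \<alpha>
    using isobaric_tuples_le[OF that] by (simp add: fun_eq_iff)
  then show ?thesis by (auto simp: isobaric_tuples_def)
qed

lemma isobaric_poly_0: "isobaric_poly k t 0 = 1"
  by (simp add: isobaric_poly_def isobaric_tuples_0 multinom_def isobaric_monom_def)

lemma sum_mult_upd_Suc:
  fixes g :: "nat \<Rightarrow> nat"
  assumes "finite A" "j \<in> A"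
  shows "(\<Sum>i\<in>A. g i * (\<alpha>(j := Suc (\<alpha> j))) i) = (\<Sum>i\<in>A. g i * \<alpha> i) + g j"
proof -
  have "(\<Sum>i\<in>A. g i * (\<alpha>(j := Suc (\<alpha> j))) i) = (\<Sum>i\<in>A. g i * \<alpha> i + (if i = j then g i else 0))"
    by (rule sum.cong) auto
  then show ?thesis using assms by (simp add: sum.distrib)
qed

lemma isobaric_monom_upd_Suc:
  assumes "j \<in> {1..k}"
  shows "isobaric_monom k t (\<alpha>(j := Suc (\<alpha> j))) = t j * isobaric_monom k t \<alpha>"
proof -
  have "isobaric_monom k t (\<alpha>(j := Suc (\<alpha> j))) = t j ^ Suc (\<alpha> j) * (\<Prod>i\<in>{1..k} - {j}. t i ^ \<alpha> i)"
    unfolding isobaric_monom_def using assms by (simp add: prod.remove)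
  also have "\<dots> = t j * isobaric_monom k t \<alpha>"
    unfolding isobaric_monom_def using assms by (simp add: prod.remove)
  finally show ?thesis .
qed

lemma multinom_upd_Suc:
  assumes "j \<in> {1..k}"
  shows "multinom k (\<alpha>(j := Suc (\<alpha> j))) * of_nat (Suc (\<alpha> j)) =
    of_nat (Suc (\<Sum>i=1..k. \<alpha> i)) * (multinom k \<alpha> :: 'a::field_char_0)"
proof -
  define P :: 'a where "P = (\<Prod>i\<in>{1..k} - {j}. of_nat (fact (\<alpha> i)))"
  define S where "S = (\<Sum>i=1..k. \<alpha> i)"
  define a :: 'a where "a = of_nat (Suc (\<alpha> j))"
  have "(\<Sum>i=1..k. (\<alpha>(j := Suc (\<alpha> j))) i) = Suc S"
    using sum_mult_upd_Suc[of "{1..k}" j "\<lambda>_. 1" \<alpha>] assms by (simp add: S_def)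
  then have "multinom k (\<alpha>(j := Suc (\<alpha> j))) = of_nat (Suc S) * fact S / (a * (fact (\<alpha> j) * P))"
    unfolding multinom_def P_def a_def using assms
    by (simp add: prod.remove fact_Suc mult.assoc distrib_right)
  moreover have "multinom k \<alpha> = fact S / (fact (\<alpha> j) * P)"
    unfolding multinom_def P_def S_def using assms by (simp add: prod.remove)
  moreover have "a \<noteq> 0"
    unfolding a_def by (simp only: of_nat_eq_0_iff)
  ultimately show ?thesis
    unfolding S_def[symmetric] a_def[symmetric] by simp
qed

lemma bij_betw_isobaric_tuples_upd_Suc:
  assumes j: "j \<in> {1..k}" and "j \<le> m"
  shows "bij_betw (\<lambda>\<beta>. \<beta>(j := Suc (\<beta> j))) (isobaric_tuples k (m - j)) {\<alpha> \<in> isobaric_tuples k m. 0 < \<alpha> j}"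
proof (rule bij_betw_byWitness[where f' = "\<lambda>\<alpha>. \<alpha>(j := \<alpha> j - 1)"])
  have weight: "(\<Sum>i=1..k. i * (\<beta>(j := Suc (\<beta> j))) i) = (\<Sum>i=1..k. i * \<beta> i) + j" for \<beta>
    using sum_mult_upd_Suc[of "{1..k}" j "\<lambda>i. i" \<beta>] j by simp
  show "(\<lambda>\<beta>. \<beta>(j := Suc (\<beta> j))) ` isobaric_tuples k (m - j) \<subseteq> {\<alpha> \<in> isobaric_tuples k m. 0 < \<alpha> j}"
    using weight j \<open>j \<le> m\<close> by (auto simp: isobaric_tuples_def)
  show "(\<lambda>\<alpha>. \<alpha>(j := \<alpha> j - 1)) ` {\<alpha> \<in> isobaric_tuples k m. 0 < \<alpha> j} \<subseteq> isobaric_tuples k (m - j)"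
  proof safe
    fix \<alpha> assume \<alpha>: "\<alpha> \<in> isobaric_tuples k m" "0 < \<alpha> j"
    then have "\<alpha> = (\<alpha>(j := \<alpha> j - 1))(j := Suc ((\<alpha>(j := \<alpha> j - 1)) j))" by auto
    then have "m = (\<Sum>i=1..k. i * (\<alpha>(j := \<alpha> j - 1)) i) + j"
      using \<alpha>(1) weight[of "\<alpha>(j := \<alpha> j - 1)"] by (simp add: isobaric_tuples_def)
    then show "\<alpha>(j := \<alpha> j - 1) \<in> isobaric_tuples k (m - j)"
      using \<alpha>(1) j by (auto simp: isobaric_tuples_def)
  qed
qed auto

text \<open>Removing one part \<open>j\<close> from \<open>\<alpha>\<close> divides its multinomial coefficient by \<open>|\<alpha>| / \<alpha> j\<close>.\<close>
lemma mult_isobaric_poly: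
  fixes t :: "nat \<Rightarrow> 'a::field_char_0"
  assumes j: "j \<in> {1..k}" and "j \<le> m"
  shows "t j * isobaric_poly k t (m - j) =
    (\<Sum>\<alpha>\<in>isobaric_tuples k m. multinom k \<alpha> * of_nat (\<alpha> j) / of_nat (\<Sum>i=1..k. \<alpha> i) * isobaric_monom k t \<alpha>)"
    (is "_ = (\<Sum>\<alpha>\<in>_. ?G \<alpha>)")
proof -
  have "?G (\<beta>(j := Suc (\<beta> j))) = t j * (multinom k \<beta> * isobaric_monom k t \<beta>)" for \<beta>
  proof -
    have "(\<Sum>i=1..k. (\<beta>(j := Suc (\<beta> j))) i) = Suc (\<Sum>i=1..k. \<beta> i)"
      using sum_mult_upd_Suc[of "{1..k}" j "\<lambda>_. 1" \<beta>] j by simp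
    moreover have "(of_nat (Suc (\<Sum>i=1..k. \<beta> i)) :: 'a) \<noteq> 0"
      by (simp only: of_nat_eq_0_iff)
    ultimately show ?thesis
      using multinom_upd_Suc[OF j, of \<beta>, where 'a = 'a] isobaric_monom_upd_Suc[OF j, of t \<beta>]
      by (simp add: ac_simps del: of_nat_Suc)
  qed
  then have "t j * isobaric_poly k t (m - j) = (\<Sum>\<beta>\<in>isobaric_tuples k (m - j). ?G (\<beta>(j := Suc (\<beta> j))))"
    by (simp add: isobaric_poly_def sum_distrib_left)
  also have "\<dots> = (\<Sum>\<alpha> | \<alpha> \<in> isobaric_tuples k m \<and> 0 < \<alpha> j. ?G \<alpha>)"
    by (rule sum.reindex_bij_betw[OF bij_betw_isobaric_tuples_upd_Suc[OF assms]])
  also have "\<dots> = (\<Sum>\<alpha>\<in>isobaric_tuples k m. ?G \<alpha>)"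
    by (rule sum.mono_neutral_left) (auto simp: finite_isobaric_tuples)
  finally show ?thesis .
qed

lemma weighted_isobaric_recurrence:
  fixes t :: "nat \<Rightarrow> 'a::field_char_0"
  shows "weighted_isobaric \<omega> k m t =
    (\<Sum>j=1..k. if j \<le> m then of_int (\<omega> j) * t j * isobaric_poly k t (m - j) else 0)"
proof -
  let ?G = "\<lambda>j \<alpha>. of_int (\<omega> j) * (multinom k \<alpha> * of_nat (\<alpha> j) / of_nat (\<Sum>i=1..k. \<alpha> i) * isobaric_monom k t \<alpha>)"
  have "(if j \<le> m then of_int (\<omega> j) * t j * isobaric_poly k t (m - j) else 0) =
      (\<Sum>\<alpha>\<in>isobaric_tuples k m. ?G j \<alpha>)" if "j \<in> {1..k}" for j
  proof (cases "j \<le> m")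
    case True
    then show ?thesis by (simp add: mult_isobaric_poly[OF that True] sum_distrib_left mult.assoc)
  next
    case False
    then show ?thesis by (simp add: isobaric_tuples_vanish)
  qed
  then have "(\<Sum>j=1..k. if j \<le> m then of_int (\<omega> j) * t j * isobaric_poly k t (m - j) else 0) =
      (\<Sum>j=1..k. \<Sum>\<alpha>\<in>isobaric_tuples k m. ?G j \<alpha>)"
    by (rule sum.cong[OF refl])
  also have "\<dots> = (\<Sum>\<alpha>\<in>isobaric_tuples k m. \<Sum>j=1..k. ?G j \<alpha>)"
    by (rule sum.swap)
  also have "\<dots> = weighted_isobaric \<omega> k m t"
    unfolding weighted_isobaric_def Let_def multinom_def isobaric_monom_def of_int_sum
    by (intro sum.cong refl) (simp add: sum_divide_distrib sum_distrib_left sum_distrib_right algebra_simps)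
  finally show ?thesis by simp
qed

lemma isobaric_poly_recurrence:
  fixes t :: "nat \<Rightarrow> 'a::field_char_0"
  assumes "m \<ge> 1"
  shows "isobaric_poly k t m = (\<Sum>j=1..k. if j \<le> m then t j * isobaric_poly k t (m - j) else 0)"
proof -
  have "(\<Sum>j=1..k. \<alpha> j) \<noteq> 0" if "\<alpha> \<in> isobaric_tuples k m" for \<alpha>
  proof
    assume "(\<Sum>j=1..k. \<alpha> j) = 0"
    then have "(\<Sum>j=1..k. j * \<alpha> j) = 0" by simp
    then show False using that assms by (simp add: isobaric_tuples_def)
  qed
  then have "isobaric_poly k t m = weighted_isobaric (\<lambda>_. 1) k m t"
    unfolding isobaric_poly_def weighted_isobaric_def Let_def multinom_def isobaric_monom_def
    by (intro sum.cong refl) (simp del: of_nat_sum add: of_nat_sum[symmetric])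
  then show ?thesis unfolding weighted_isobaric_recurrence of_int_1 mult_1 .
qed

section \<open>Permanent and determinant of the Hessenberg matrices\<close>

definition hess_toeplitz :: "'a \<Rightarrow> (nat \<Rightarrow> 'a) \<Rightarrow> nat \<Rightarrow> nat \<Rightarrow> 'a::comm_ring_1" where
  "hess_toeplitz s t i j = (if j \<le> i then t (i - j + 1) else if j = Suc i then s else 0)"

lemma sum_atMost_reflect:
  "(\<Sum>a\<le>n. g (n - a + 1)) = (\<Sum>j=1..Suc n. g j)"
  by (rule sum.reindex_bij_witness[where i = "\<lambda>j. Suc n - j" and j = "\<lambda>a. n - a + 1"]) auto

lemma sum_atLeastAtMost_truncate:
  fixes g :: "nat \<Rightarrow> 'a::comm_monoid_add"
  assumes "\<And>j. k < j \<Longrightarrow> g j = 0"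
  shows "(\<Sum>j=1..N. g j) = (\<Sum>j=1..k. if j \<le> N then g j else 0)"
proof -
  have "(\<Sum>j=1..max N k. if j \<le> N then g j else 0) = (\<Sum>j=1..N. g j)"
    by (rule sum.mono_neutral_cong_right) auto
  moreover have "(\<Sum>j=1..max N k. if j \<le> N then g j else 0) = (\<Sum>j=1..k. if j \<le> N then g j else 0)"
    by (rule sum.mono_neutral_cong_right) (auto simp: assms)
  ultimately show ?thesis by simp
qed

lemma hess_sum_toeplitz:
  fixes t :: "nat \<Rightarrow> 'a::field_char_0"
  assumes c: "hess_weight c \<epsilon>" and "\<epsilon> * s = 1" and t: "\<forall>j>k. t j = 0"
  shows "hess_sum c (hess_toeplitz s t) m = isobaric_poly k t m"
proof (induction m rule: less_induct)
  case (less m)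
  show ?case
  proof (cases m)
    case 0
    then show ?thesis using c by (simp add: hess_sum_0 isobaric_poly_0 hess_weight_def)
  next
    case (Suc n)
    have "hess_sum c (hess_toeplitz s t) (Suc n) = (\<Sum>a\<le>n. hess_toeplitz s t n a * hess_sum c (hess_toeplitz s t) a)"
      using c assms(2) by (intro hess_sum_Suc) (auto simp: hess_toeplitz_def)
    also have "\<dots> = (\<Sum>a\<le>n. t (n - a + 1) * isobaric_poly k t (Suc n - (n - a + 1)))"
      by (intro sum.cong refl) (auto simp: hess_toeplitz_def less.IH Suc Suc_diff_le)
    also have "\<dots> = (\<Sum>j=1..Suc n. t j * isobaric_poly k t (Suc n - j))"
      by (rule sum_atMost_reflect[where g = "\<lambda>j. t j * isobaric_poly k t (Suc n - j)"])
    also have "\<dots> = (\<Sum>j=1..k. if j \<le> Suc n then t j * isobaric_poly k t (Suc n - j) else 0)"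
      by (rule sum_atLeastAtMost_truncate) (simp add: t)
    also have "\<dots> = isobaric_poly k t (Suc n)"
      by (rule isobaric_poly_recurrence[symmetric]) simp
    finally show ?thesis using Suc by simp
  qed
qed

lemma hess_sum_hess_mat:
  fixes t :: "nat \<Rightarrow> 'a::field_char_0"
  assumes c: "hess_weight c \<epsilon>" and "\<epsilon> * s = 1" and t: "\<forall>j>k. t j = 0"
  shows "hess_sum c (\<lambda>i j. hess_mat s \<omega> t (Suc n) $$ (i, j)) (Suc n) = weighted_isobaric \<omega> k (Suc n) t"
proof -
  let ?H = "\<lambda>i j. hess_mat s \<omega> t (Suc n) $$ (i, j)"
  have "hess_sum c ?H (Suc n) = (\<Sum>a\<le>n. ?H n a * hess_sum c ?H a)"
    using c assms(2) by (intro hess_sum_Suc) (auto simp: hess_mat_def)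
  also have "\<dots> = (\<Sum>a\<le>n. of_int (\<omega> (n - a + 1)) * t (n - a + 1) * isobaric_poly k t (Suc n - (n - a + 1)))"
  proof (intro sum.cong refl)
    fix a assume "a \<in> {..n}"
    then have "hess_sum c ?H a = hess_sum c (hess_toeplitz s t) a"
      by (intro hess_sum_cong) (auto simp: hess_mat_def hess_toeplitz_def)
    with \<open>a \<in> {..n}\<close> show "?H n a * hess_sum c ?H a =
        of_int (\<omega> (n - a + 1)) * t (n - a + 1) * isobaric_poly k t (Suc n - (n - a + 1))"
      by (simp add: hess_sum_toeplitz[OF assms] hess_mat_def Suc_diff_le)
  qed
  also have "\<dots> = (\<Sum>j=1..Suc n. of_int (\<omega> j) * t j * isobaric_poly k t (Suc n - j))"
    by (rule sum_atMost_reflect[where g = "\<lambda>j. of_int (\<omega> j) * t j * isobaric_poly k t (Suc n - j)"])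
  also have "\<dots> = (\<Sum>j=1..k. if j \<le> Suc n then of_int (\<omega> j) * t j * isobaric_poly k t (Suc n - j) else 0)"
    by (rule sum_atLeastAtMost_truncate) (simp add: t)
  also have "\<dots> = weighted_isobaric \<omega> k (Suc n) t"
    by (rule weighted_isobaric_recurrence[symmetric])
  finally show ?thesis .
qed

theorem theorem14:
  fixes k n :: nat and \<omega> :: "nat \<Rightarrow> int" and t :: "nat \<Rightarrow> 'a::field_char_0"
  assumes "k \<ge> 1" and "n \<ge> 1"
    and "\<forall>j>k. t j = 0"
  shows "perm_mat (hess_mat 1 \<omega> t n) = weighted_isobaric \<omega> k n t \<and>
         det (hess_mat (-1) \<omega> t n) = weighted_isobaric \<omega> k n t"
proof -
  obtain m where n: "n = Suc m" using assms(2) by (cases n) auto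
  have carrier: "hess_mat s \<omega> t n \<in> carrier_mat n n" for s :: 'a
    by (simp add: hess_mat_def)
  have hessenberg: "hess_mat s \<omega> t n $$ (i, j) = 0" if "i < n" "j < n" "Suc i < j" for s :: 'a and i j
    using that by (simp add: hess_mat_def)
  have "perm_mat (hess_mat 1 \<omega> t n) = hess_sum (\<lambda>_. 1) (\<lambda>i j. hess_mat 1 \<omega> t n $$ (i, j)) n"
    by (rule perm_mat_lower_hessenberg[OF carrier hessenberg])
  also have "\<dots> = weighted_isobaric \<omega> k n t"
    unfolding n by (rule hess_sum_hess_mat[OF hess_weight_one _ assms(3)]) simp
  finally have perm: "perm_mat (hess_mat 1 \<omega> t n) = weighted_isobaric \<omega> k n t" .
  have "det (hess_mat (-1) \<omega> t n) = hess_sum signof (\<lambda>i j. hess_mat (-1) \<omega> t n $$ (i, j)) n"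
    by (rule det_lower_hessenberg[OF carrier hessenberg])
  also have "\<dots> = weighted_isobaric \<omega> k n t"
    unfolding n by (rule hess_sum_hess_mat[OF hess_weight_signof _ assms(3)]) simp
  finally show ?thesis using perm by simp
qed

end
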